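(* Let $(Y,d)$ be a complete separable metric space and $f:Y\to Y$ continuous. Let $K\neq\varnothing$ be an isolated invariant set of $f$, and let $N,N'$ be two $f$-admissible isolating neighborhoods of $K$ with \[ N\subset \operatorname{int}N'\cap f^{-1}(\operatorname{int}N'). \] Assume moreover that \[ A^-(N)=A(N)=K. \] Then there exists an $f$-admissible isolating neighborhood $B\subset N$ of $K$ which is positively invariant, i.e. $f(B)\subset B$.
   Context: A full left solution of $f$ in a set $N$ is a sequence $\{x_{-n}\}_{n\in\mathbb N}\subset N$ with $f(x_{n-1})=x_n$ for all $n\le 0$. The following sets are defined for $N\subset Y$: \begin{itemize} \item $A^+(N)=\{x\in N: f^k(x)\in N \text{ for all } k\ge0\}$; \item $A^-(N)=\{x\in N: \text{there is a full left solution in } N \text{ through } x_0=x\}$; \item $A(N)=A^+(N)\cap A^-(N)$, the maximal invariant set in $N$. \end{itemize} A set $K$ is invariant if $A(K)=K$. It is an isolated invariant set, with isolating neighborhood $N$, if $N$ is a closed neighborhood of $K$ with $A(N)=K$. For $0\le l\le m$ put $f^{[l,m]}(x)=\{f^k(x): k\in\mathbb N\cap[l,m]\}$. A closed bounded set $N$ is $f$-admissible if, for any sequences $x_n\in Y$ and $m_n\to\infty$ with $f^{[0,m_n]}(x_n)\subset N$, the sequence $\{f^{m_n}(x_n)\}$ has a convergent subsequence. *)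

theory Defs
  imports "HOL-Analysis.Analysis"
begin

text \<open>A full left solution through x in N is encoded as s :: nat => 'a with s n = x_{-n}.\<close>

definition full_left_solution :: "('a \<Rightarrow> 'a) \<Rightarrow> 'a set \<Rightarrow> (nat \<Rightarrow> 'a) \<Rightarrow> bool" where
  "full_left_solution f N s \<longleftrightarrow> (\<forall>n. s n \<in> N \<and> f (s (Suc n)) = s n)"

definition Aplus :: "('a \<Rightarrow> 'a) \<Rightarrow> 'a set \<Rightarrow> 'a set" where
  "Aplus f N = {x \<in> N. \<forall>k. (f ^^ k) x \<in> N}"

definition Aminus :: "('a \<Rightarrow> 'a) \<Rightarrow> 'a set \<Rightarrow> 'a set" where
  "Aminus f N = {x \<in> N. \<exists>s. full_left_solution f N s \<and> s 0 = x}"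

definition Ainv :: "('a \<Rightarrow> 'a) \<Rightarrow> 'a set \<Rightarrow> 'a set" where
  "Ainv f N = Aplus f N \<inter> Aminus f N"

definition invariant_set :: "('a \<Rightarrow> 'a) \<Rightarrow> 'a set \<Rightarrow> bool" where
  "invariant_set f K \<longleftrightarrow> Ainv f K = K"

definition isolating_nbhd :: "('a::topological_space \<Rightarrow> 'a) \<Rightarrow> 'a set \<Rightarrow> 'a set \<Rightarrow> bool" where
  "isolating_nbhd f N K \<longleftrightarrow> closed N \<and> K \<subseteq> interior N \<and> Ainv f N = K"

definition isolated_invariant_set :: "('a::topological_space \<Rightarrow> 'a) \<Rightarrow> 'a set \<Rightarrow> bool" where
  "isolated_invariant_set f K \<longleftrightarrow> invariant_set f K \<and> (\<exists>N. isolating_nbhd f N K)"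

definition admissible :: "('a::metric_space \<Rightarrow> 'a) \<Rightarrow> 'a set \<Rightarrow> bool" where
  "admissible f N \<longleftrightarrow> closed N \<and> bounded N \<and>
     (\<forall>(x :: nat \<Rightarrow> 'a) (m :: nat \<Rightarrow> nat).
        filterlim m at_top sequentially \<longrightarrow>
        (\<forall>n. \<forall>k \<le> m n. (f ^^ k) (x n) \<in> N) \<longrightarrow>
        (\<exists>r. strict_mono r \<and> convergent ((\<lambda>n. (f ^^ m n) (x n)) \<circ> r)))"

end

theory Submission
  imports Defs
begin

(* The positively invariant neighbourhood is B = A+(N), the set of points whose
   whole forward orbit stays in N.  It is closed (N is closed and f continuous), contained in N,
   positively invariant by construction, and admissible as a closed subset of the admissible
   set N.  Monotonicity of A together with A(K) = K and A(N) = K gives A(B) = K.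
   The real content is that K lies in the interior of A+(N).  If y in K were a limit of points
   X_n of N leaving N at a first exit time M_n, then M_n tends to infinity (the orbit of y stays
   in int N), so by admissibility the points f^(M_n - 1)(X_n) accumulate at some z, and a
   diagonal argument over nested subsequences shows that z has a full left solution in N,
   i.e. z in A-(N) = K.  Then f z in int N, contradicting f^(M_n)(X_n) outside N. *)

lemma continuous_on_funpow:
  fixes f :: "'a::topological_space \<Rightarrow> 'a"
  assumes "continuous_on UNIV f"
  shows "continuous_on UNIV (f ^^ k)"
proof (induction k)
  case (Suc k)
  then show ?case
    using continuous_on_compose2[OF assms Suc subset_UNIV] by (simp add: comp_def)
qed (simp add: continuous_on_id)

lemma tendsto_funpow:
  fixes f :: "'a::t2_space \<Rightarrow> 'a"
  assumes "continuous_on UNIV f" and "X \<longlonglongrightarrow> y"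
  shows "(\<lambda>n. (f ^^ k) (X n)) \<longlonglongrightarrow> (f ^^ k) y"
proof -
  have "isCont (f ^^ k) y"
    using continuous_on_funpow[OF assms(1)] by (simp add: continuous_on_eq_continuous_at)
  then show ?thesis using assms(2) by (rule isCont_tendsto_compose)
qed

lemma Aplus_subset: "Aplus f N \<subseteq> N"
  by (auto simp: Aplus_def)

text \<open>\<open>A\<^sup>+(N)\<close> is an intersection of preimages of \<open>N\<close> under continuous iterates.\<close>

lemma closed_Aplus:
  assumes "continuous_on UNIV f" and "closed N"
  shows "closed (Aplus f N)"
proof -
  have "Aplus f N = N \<inter> (\<Inter>k. (f ^^ k) -` N)"
    by (auto simp: Aplus_def)
  then show ?thesis
    using assms by (auto intro!: closed_vimage continuous_on_funpow)
qed

lemma Aplus_positively_invariant: "f ` Aplus f N \<subseteq> Aplus f N"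
proof
  fix y assume "y \<in> f ` Aplus f N"
  then obtain x where x: "x \<in> Aplus f N" "y = f x" by blast
  have "(f ^^ k) (f x) = (f ^^ Suc k) x" for k
    by (simp only: funpow_Suc_right comp_apply)
  then have orbit: "(f ^^ k) (f x) \<in> N" for k
    using x(1) unfolding Aplus_def by (metis (no_types, lifting) mem_Collect_eq)
  show "y \<in> Aplus f N"
    using orbit[of 0] orbit x(2) unfolding Aplus_def by simp
qed

lemma Ainv_mono:
  assumes "M \<subseteq> N"
  shows "Ainv f M \<subseteq> Ainv f N"
  using assms unfolding Ainv_def Aplus_def Aminus_def full_left_solution_def by blast

lemma admissible_closed_subset:
  assumes "admissible f N" and "closed B" and "B \<subseteq> N"
  shows "admissible f B"
  using assms bounded_subset unfolding admissible_def by blast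

lemma admissibleD:
  assumes "admissible f N" and "filterlim m at_top sequentially"
    and "\<And>n k. k \<le> m n \<Longrightarrow> (f ^^ k) (x n) \<in> N"
  obtains r where "strict_mono r" "convergent ((\<lambda>n. (f ^^ m n) (x n)) \<circ> r)"
  using assms unfolding admissible_def by blast

lemma nested_subsequences:
  fixes Q :: "nat \<Rightarrow> (nat \<Rightarrow> nat) \<Rightarrow> bool"
  assumes refine: "\<And>j (r :: nat \<Rightarrow> nat). strict_mono r \<Longrightarrow> \<exists>s. strict_mono s \<and> Q j (r \<circ> s)"
  obtains R where "\<And>j. strict_mono (R j)" "\<And>j. Q j (R j)"
    "\<And>j. \<exists>s. strict_mono s \<and> R (Suc j) = R j \<circ> s"
proof -
  define refined :: "nat \<Rightarrow> (nat \<Rightarrow> nat) \<Rightarrow> nat \<Rightarrow> nat" where "refined j r = r \<circ> (SOME s. strict_mono s \<and> Q j (r \<circ> s))" for j r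
  have refined: "strict_mono (refined j r) \<and> Q j (refined j r)
      \<and> (\<exists>s. strict_mono s \<and> refined j r = r \<circ> s)" if "strict_mono r" for j and r :: "nat \<Rightarrow> nat"
    using someI_ex[OF refine[OF that, of j]] that
    by (auto simp: refined_def intro: strict_mono_o)
  define R where "R = rec_nat (refined 0 id) (\<lambda>j r. refined (Suc j) r)"
  have R0: "R 0 = refined 0 id" and RSuc: "R (Suc j) = refined (Suc j) (R j)" for j
    by (simp_all add: R_def)
  have mono: "strict_mono (R j)" for j
    by (induction j) (use refined strict_mono_id in \<open>auto simp: R0 RSuc\<close>)
  show ?thesis
  proof
    show "Q j (R j)" for j
      by (cases j) (use refined mono strict_mono_id in \<open>auto simp: R0 RSuc\<close>)
    show "\<exists>s. strict_mono s \<and> R (Suc j) = R j \<circ> s" for j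
      using refined[OF mono[of j]] by (simp add: RSuc)
  qed (rule mono)
qed

text \<open>For an admissible \<open>N\<close>, endpoints of orbit segments in \<open>N\<close> of unbounded length have a
  subsequence converging to a point with a full left solution in \<open>N\<close>: the \<open>j\<close>-th point of that
  solution is a limit of the points \<open>j\<close> steps before the endpoints, along a nested
  subsequence provided by admissibility.\<close>

lemma admissible_endpoint_limit:
  fixes f :: "'a::metric_space \<Rightarrow> 'a"
  assumes cont: "continuous_on UNIV f" and adm: "admissible f N"
    and m: "filterlim m at_top sequentially"
    and orbit: "\<And>n k. k \<le> m n \<Longrightarrow> (f ^^ k) (x n) \<in> N"
  obtains r z where "strict_mono r" "(\<lambda>n. (f ^^ m (r n)) (x (r n))) \<longlonglongrightarrow> z" "z \<in> Aminus f N"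
proof -
  define seg where "seg j n = (f ^^ (m n - j)) (x n)" for j n
  have m_sub: "filterlim (\<lambda>n. m (r n)) at_top sequentially" if "strict_mono r" for r
    using filterlim_compose[OF m filterlim_subseq[OF that]] .
  have "\<exists>s. strict_mono s \<and> convergent (\<lambda>n. seg j ((r \<circ> s) n))"
    if "strict_mono r" for j and r :: "nat \<Rightarrow> nat"
  proof -
    have "filterlim (\<lambda>n. m (r n) - j) at_top sequentially"
      using filterlim_compose[OF filterlim_minus_const_nat_at_top m_sub[OF that]] .
    then obtain s where "strict_mono s"
        "convergent ((\<lambda>n. (f ^^ (m (r n) - j)) (x (r n))) \<circ> s)"
      using admissibleD[OF adm, of "\<lambda>n. m (r n) - j" "\<lambda>n. x (r n)"] orbit by force
    then show ?thesis by (auto simp: seg_def comp_def)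
  qed
  then obtain R where R_mono: "\<And>j. strict_mono (R j)"
    and R_conv: "\<And>j. convergent (\<lambda>n. seg j (R j n))"
    and R_nested: "\<And>j. \<exists>s. strict_mono s \<and> R (Suc j) = R j \<circ> s"
    by (rule nested_subsequences[where Q = "\<lambda>j r. convergent (\<lambda>n. seg j (r n))"]) auto
  define Z where "Z j = lim (\<lambda>n. seg j (R j n))" for j
  have Z_lim: "(\<lambda>n. seg j (R j n)) \<longlonglongrightarrow> Z j" for j
    using R_conv by (simp add: Z_def convergent_LIMSEQ_iff)
  have Z_in: "Z j \<in> N" for j
    using closed_sequentially[OF _ _ Z_lim[of j]] adm orbit
    by (auto simp: admissible_def seg_def)
  have Z_step: "f (Z (Suc j)) = Z j" for j
  proof -
    obtain s where s: "strict_mono s" "R (Suc j) = R j \<circ> s" using R_nested by blast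
    have "(\<lambda>n. seg j (R (Suc j) n)) \<longlonglongrightarrow> Z j"
      using LIMSEQ_subseq_LIMSEQ[OF Z_lim[of j] s(1)] s(2) by (simp add: comp_def)
    moreover have "(\<lambda>n. seg j (R (Suc j) n)) \<longlonglongrightarrow> f (Z (Suc j))"
    proof (rule Lim_transform_eventually)
      show "(\<lambda>n. f (seg (Suc j) (R (Suc j) n))) \<longlonglongrightarrow> f (Z (Suc j))"
        using cont Z_lim by (auto simp: continuous_on_eq_continuous_at intro: isCont_tendsto_compose)
      have "eventually (\<lambda>n. Suc j \<le> m (R (Suc j) n)) sequentially"
        using m_sub[OF R_mono] by (simp add: filterlim_at_top)
      then show "eventually (\<lambda>n. f (seg (Suc j) (R (Suc j) n)) = seg j (R (Suc j) n)) sequentially"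
        by (rule eventually_mono) (simp add: seg_def Suc_diff_Suc[symmetric])
    qed
    ultimately show ?thesis by (rule LIMSEQ_unique[symmetric])
  qed
  have "full_left_solution f N Z"
    using Z_in Z_step by (simp add: full_left_solution_def)
  then have "Z 0 \<in> Aminus f N"
    using Z_in by (auto simp: Aminus_def)
  moreover have "(\<lambda>n. (f ^^ m (R 0 n)) (x (R 0 n))) \<longlonglongrightarrow> Z 0"
    using Z_lim[of 0] by (simp add: seg_def)
  ultimately show ?thesis using that R_mono by blast
qed

lemma exit_times_tendsto_infinity:
  fixes f :: "'a::t2_space \<Rightarrow> 'a"
  assumes cont: "continuous_on UNIV f" and X: "X \<longlonglongrightarrow> y"
    and orbit: "\<And>k. (f ^^ k) y \<in> interior N"
    and exits: "\<And>n. (f ^^ M n) (X n) \<notin> N"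
  shows "filterlim M at_top sequentially"
  unfolding filterlim_at_top
proof
  fix c
  have "\<forall>k\<in>{..<c}. eventually (\<lambda>n. (f ^^ k) (X n) \<in> interior N) sequentially"
    using orbit topological_tendstoD[OF tendsto_funpow[OF cont X]] by blast
  then have "eventually (\<lambda>n. \<forall>k\<in>{..<c}. (f ^^ k) (X n) \<in> interior N) sequentially"
    by (simp add: eventually_ball_finite)
  then show "eventually (\<lambda>n. c \<le> M n) sequentially"
    by (rule eventually_mono) (metis exits interior_subset lessThan_iff not_le subsetD)
qed

lemma interior_Aplus:
  fixes f :: "'a::metric_space \<Rightarrow> 'a"
  assumes cont: "continuous_on UNIV f" and adm: "admissible f N"
    and to_interior: "\<And>z. z \<in> Aminus f N \<Longrightarrow> f z \<in> interior N"
    and orbit: "\<And>k. (f ^^ k) y \<in> interior N"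
  shows "y \<in> interior (Aplus f N)"
proof (rule ccontr)
  assume "y \<notin> interior (Aplus f N)"
  then have "y \<in> interior N \<inter> closure (- Aplus f N)"
    using orbit[of 0] by (simp add: closure_complement)
  then have "y \<in> closure (interior N - Aplus f N)"
    using open_Int_closure_subset[OF open_interior] by (auto simp: Diff_eq)
  then obtain X where X: "\<And>n. X n \<in> interior N - Aplus f N" "X \<longlonglongrightarrow> y"
    unfolding closure_sequential by blast
  have X_in: "X n \<in> N" for n using X(1) interior_subset by blast
  have "\<exists>k. (f ^^ k) (X n) \<notin> N" for n
    using X(1)[of n] X_in by (auto simp: Aplus_def)
  define M where "M n = (LEAST k. (f ^^ k) (X n) \<notin> N)" for n
  have M_out: "(f ^^ M n) (X n) \<notin> N" for n
    unfolding M_def by (rule LeastI_ex) fact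
  have M_in: "(f ^^ k) (X n) \<in> N" if "k < M n" for n k
    using not_less_Least that unfolding M_def by blast
  have M_pos: "M n = Suc (M n - 1)" for n
    using M_out[of n] X_in[of n] by (cases "M n") auto
  have "filterlim M at_top sequentially"
    using exit_times_tendsto_infinity[OF cont X(2) orbit M_out] .
  then have "filterlim (\<lambda>n. M n - 1) at_top sequentially"
    using filterlim_compose[OF filterlim_minus_const_nat_at_top] by blast
  moreover have "(f ^^ k) (X n) \<in> N" if "k \<le> M n - 1" for n k
    using M_in M_pos that by (metis le_imp_less_Suc)
  ultimately obtain r z where "(\<lambda>n. (f ^^ (M (r n) - 1)) (X (r n))) \<longlonglongrightarrow> z" and z: "z \<in> Aminus f N"
    using admissible_endpoint_limit[OF cont adm] by blast
  then have "(\<lambda>n. f ((f ^^ (M (r n) - 1)) (X (r n)))) \<longlonglongrightarrow> f z"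
    using cont by (auto simp: continuous_on_eq_continuous_at intro: isCont_tendsto_compose)
  then have "(\<lambda>n. (f ^^ M (r n)) (X (r n))) \<longlonglongrightarrow> f z"
    by (subst M_pos) simp
  then have "eventually (\<lambda>n. (f ^^ M (r n)) (X (r n)) \<in> interior N) sequentially"
    using topological_tendstoD[OF _ open_interior to_interior[OF z]] by blast
  then have "eventually (\<lambda>n. False) sequentially"
    by (rule eventually_mono) (use M_out interior_subset in blast)
  then show False by simp
qed

theorem theorem1:
  fixes f :: "'a::{complete_space, second_countable_topology} \<Rightarrow> 'a"
    and K N N' :: "'a set"
  assumes "continuous_on UNIV f"
    and "K \<noteq> {}"
    and "isolated_invariant_set f K"
    and "admissible f N" and "isolating_nbhd f N K"
    and "admissible f N'" and "isolating_nbhd f N' K"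
    and "N \<subseteq> interior N' \<inter> f -` interior N'"
    and "Aminus f N = Ainv f N" and "Ainv f N = K"
  shows "\<exists>B. B \<subseteq> N \<and> admissible f B \<and> isolating_nbhd f B K \<and> f ` B \<subseteq> B"
proof -
  note cont = assms(1) and adm = assms(4)
  have K_inv: "Ainv f K = K"
    using assms(3) by (simp add: isolated_invariant_set_def invariant_set_def)
  have K_orbit: "(f ^^ k) y \<in> K" if "y \<in> K" for y k
    using that K_inv by (auto simp: Ainv_def Aplus_def)
  have K_int: "K \<subseteq> interior N"
    using assms(5) by (simp add: isolating_nbhd_def)
  have "f z \<in> interior N" if "z \<in> Aminus f N" for z
    using K_orbit[of z 1] K_int that assms(9,10) by auto
  then have K_int_B: "K \<subseteq> interior (Aplus f N)"
    using interior_Aplus[OF cont adm] K_orbit K_int by blast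
  have closed_B: "closed (Aplus f N)"
    using closed_Aplus[OF cont] adm by (simp add: admissible_def)
  text \<open>\<open>A(A\<^sup>+(N))\<close> is squeezed between \<open>A(K) = K\<close> and \<open>A(N) = K\<close>.\<close>
  have "Ainv f (Aplus f N) = K"
    using Ainv_mono[OF Aplus_subset[where f = f and N = N]]
      Ainv_mono[where M = K and N = "Aplus f N" and f = f] K_int_B interior_subset K_inv assms(10) by blast
  then have "isolating_nbhd f (Aplus f N) K"
    using closed_B K_int_B by (simp add: isolating_nbhd_def)
  moreover have "admissible f (Aplus f N)"
    using admissible_closed_subset[OF adm closed_B Aplus_subset] .
  ultimately show ?thesis
    using Aplus_subset[of f N] Aplus_positively_invariant[of f N] by blast
qed

end
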